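(* Assume $\lambda d(1-s^d_i)>\gamma$ for all $d,i$. For $x^*\in\mathcal{X}$, let $\Theta^*=\bar\Theta(x^* )>0$. Then $\partial H/\partial\Theta(\Theta^*,x^* )<0$, so there is an open neighborhood $N\subset\mathbb{R}^n$ of $x^*$ and a unique continuously differentiable $h:N\to(0,\infty)$ with $h(x^* )=\Theta^*$ and $H(h(y),y)=0$ for $y\in N$. Define $F^d_i(y)=s^d_i r-(1-s^d_i)\frac{\theta^d_i h(y)}{\gamma+\theta^d_i h(y)}$ on $N$. Then the game is submodular at $x^*$ in the sense that for all $d,c\in\{1,\dots,D\}$, all $k\in\{1,\dots,n^d-1\}$ and all $l\in\{1,\dots,n^c-1\}$, $$\frac{\partial F^d_{k+1}}{\partial x^c_{l+1}}(x^* )-\frac{\partial F^d_{k}}{\partial x^c_{l+1}}(x^* )-\frac{\partial F^d_{k+1}}{\partial x^c_{l}}(x^* )+\frac{\partial F^d_{k}}{\partial x^c_{l}}(x^* )\le 0,$$ i.e. $(\Sigma^d)^T DF^d_c(x^* )\Sigma^c\le0$ entrywise, where $DF^d_c=(\partial F^d_i/\partial x^c_j)_{i,j}\in\mathbb{R}^{n^d\times n^c}$ and $\Sigma^d\in\mathbb{R}^{n^d\times(n^d-1)}$ has columns $e_{k+1}-e_k$.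
   Context: Setting: $D\in\mathbb{N}_+$ populations indexed by degree $d\in\{1,\dots,D\}$, degree distribution $m^d\in(0,1]$, $\sum_d m^d=1$, $\bar d=\sum_d d\,m^d$. Population $d$ has strategies $0\le s^d_1<\dots<s^d_{n^d}\le1$ (strictly increasing), $n=\sum_d n^d$. A social state is $x=(x^d_i)$ with $x^d_i\ge0$, $\sum_i x^d_i=m^d$; $\mathcal{X}$ is the set of social states. Constants $\lambda>0,\gamma>0$, $\theta^d_i=\lambda d(1-s^d_i)$, relative reward $r<0$. Define $H:\mathbb{R}\times\mathbb{R}^n\to\mathbb{R}$ (where $\gamma+\theta^d_i\Theta\neq0$) by $H(\Theta,x)=\frac{1}{\bar d}\sum_d d\sum_i\frac{x^d_i\theta^d_i}{\gamma+\theta^d_i\Theta}-1$. For $x\in\mathcal{X}$, $\bar\Theta(x)$ denotes the unique $\Theta>0$ with $H(\Theta,x)=0$ (the link-infection probability at the positive steady state of the SI dynamics $\dot I^d_i=-\gamma I^d_i+\lambda(1-s^d_i)(1-I^d_i)d\Theta$, $\Theta=\bar d^{-1}\sum_d\sum_i dx^d_iI^d_i$), and the steady-state payoff is $F^d_i(x)=s^d_ir-(1-s^d_i)\frac{\theta^d_i\bar\Theta(x)}{\gamma+\theta^d_i\bar\Theta(x)}$. *)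

theory Defs
  imports "HOL-Analysis.Analysis"
begin

text \<open>The ambient space R^n is rendered as real^'i for a finite index
type 'i; the coordinate x^d_i of a vector x is x $ idx d i, where idx is a bijection
from the index set {(d,i). d in {1..D}, i in {1..n d}} onto UNIV.\<close>

definition dbar :: "nat \<Rightarrow> (nat \<Rightarrow> real) \<Rightarrow> real" where
  "dbar D m = (\<Sum>d=1..D. real d * m d)"

definition theta :: "real \<Rightarrow> (nat \<Rightarrow> nat \<Rightarrow> real) \<Rightarrow> nat \<Rightarrow> nat \<Rightarrow> real" where
  "theta lam s d i = lam * real d * (1 - s d i)"

definition Hfun :: "nat \<Rightarrow> (nat \<Rightarrow> real) \<Rightarrow> (nat \<Rightarrow> nat) \<Rightarrow> (nat \<Rightarrow> nat \<Rightarrow> real)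
    \<Rightarrow> real \<Rightarrow> real \<Rightarrow> (nat \<Rightarrow> nat \<Rightarrow> 'i::finite) \<Rightarrow> real \<Rightarrow> real ^ 'i \<Rightarrow> real" where
  "Hfun D m n s lam gam idx \<Theta> x =
     (1 / dbar D m) * (\<Sum>d=1..D. real d * (\<Sum>i=1..n d.
        x $ idx d i * theta lam s d i / (gam + theta lam s d i * \<Theta>))) - 1"

definition Theta_bar :: "nat \<Rightarrow> (nat \<Rightarrow> real) \<Rightarrow> (nat \<Rightarrow> nat) \<Rightarrow> (nat \<Rightarrow> nat \<Rightarrow> real)
    \<Rightarrow> real \<Rightarrow> real \<Rightarrow> (nat \<Rightarrow> nat \<Rightarrow> 'i::finite) \<Rightarrow> real ^ 'i \<Rightarrow> real" where
  "Theta_bar D m n s lam gam idx x = (THE \<Theta>. \<Theta> > 0 \<and> Hfun D m n s lam gam idx \<Theta> x = 0)"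

definition social_state :: "nat \<Rightarrow> (nat \<Rightarrow> real) \<Rightarrow> (nat \<Rightarrow> nat) \<Rightarrow> (nat \<Rightarrow> nat \<Rightarrow> 'i::finite)
    \<Rightarrow> real ^ 'i \<Rightarrow> bool" where
  "social_state D m n idx x \<longleftrightarrow>
     (\<forall>d\<in>{1..D}. (\<forall>i\<in>{1..n d}. x $ idx d i \<ge> 0) \<and> (\<Sum>i=1..n d. x $ idx d i) = m d)"

definition payoff :: "(nat \<Rightarrow> nat \<Rightarrow> real) \<Rightarrow> real \<Rightarrow> real \<Rightarrow> real \<Rightarrow> ('a \<Rightarrow> real)
    \<Rightarrow> nat \<Rightarrow> nat \<Rightarrow> 'a \<Rightarrow> real" where
  "payoff s r lam gam h d i y =
     s d i * r - (1 - s d i) * (theta lam s d i * h y / (gam + theta lam s d i * h y))"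

definition partial :: "(real ^ 'i \<Rightarrow> real) \<Rightarrow> real ^ 'i \<Rightarrow> 'i::finite \<Rightarrow> real" where
  "partial f x j = deriv (\<lambda>t. f (x + t *\<^sub>R axis j 1)) 0"

definition implicit_sol where
  "implicit_sol D m n s lam gam idx N xs Ts h \<longleftrightarrow>
     (\<exists>h'. (\<forall>y\<in>N. (h has_derivative blinfun_apply (h' y)) (at y)) \<and> continuous_on N h') \<and>
     (\<forall>y\<in>N. h y > 0) \<and> h xs = Ts \<and>
     (\<forall>y\<in>N. Hfun D m n s lam gam idx (h y) y = 0)"

end

theory Submission
  imports Defs
begin

(* With sat_rate \<theta> \<Theta> = \<theta> / (\<gamma> + \<theta> \<Theta>), H is affine in the state y, and the identity
   sat_rate \<Theta>' - sat_rate \<Theta> = - (\<Theta>' - \<Theta>) sat_rate \<Theta> sat_rate \<Theta>' turns differences of H in \<Theta>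
   into (\<Theta>' - \<Theta>) times a secant that is minus a weighted sum of the coordinates of y.
   Because every rate \<theta> lies in (\<gamma>, \<lambda> D], all weights are comparable to 1 / ((1 + \<Theta>) (1 + \<Theta>'))
   uniformly in \<Theta>, \<Theta>' \<ge> 0, so the secant stays negative on a whole ball around x*, although
   states there may have negative coordinates. Hence H(., y) is strictly decreasing, its positive
   root h y is unique and, by the same identity, h y - h y0 = - lin (y - y0) / secant; continuity
   and the derivative of h follow from this formula. Finally the payoff is an affine function of
   sat_rate (h y), so \<partial>F^d_k / \<partial>x^c_l = \<gamma> c sat_rate_dk^2 sat_rate_cl / (\<lambda> d dbar \<partial>H/\<partial>\<Theta>);
   both factors decrease along strategies since s does, and \<partial>H/\<partial>\<Theta> < 0 makes the mixed
   second difference nonpositive. *)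

(* \<Theta> * sat_rate \<gamma> \<theta> \<Theta> is the steady-state infection probability at link-infection level \<Theta>. *)
definition sat_rate :: "real \<Rightarrow> real \<Rightarrow> real \<Rightarrow> real" where
  "sat_rate \<gamma> \<theta> \<Theta> = \<theta> / (\<gamma> + \<theta> * \<Theta>)"

lemma sat_rate_diff:
  assumes "\<gamma> + \<theta> * a \<noteq> 0" "\<gamma> + \<theta> * b \<noteq> 0"
  shows "sat_rate \<gamma> \<theta> b - sat_rate \<gamma> \<theta> a = - (b - a) * (sat_rate \<gamma> \<theta> a * sat_rate \<gamma> \<theta> b)"
  using assms unfolding sat_rate_def by (simp add: field_simps)

lemma sat_rate_deriv:
  assumes "\<gamma> + \<theta> * \<Theta> \<noteq> 0"
  shows "(sat_rate \<gamma> \<theta> has_real_derivative - (sat_rate \<gamma> \<theta> \<Theta>)\<^sup>2) (at \<Theta>)"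
  unfolding sat_rate_def[abs_def]
  using assms by (auto intro!: derivative_eq_intros simp: power2_eq_square field_simps)

lemma sat_rate_pos: "0 < \<gamma> \<Longrightarrow> 0 < \<theta> \<Longrightarrow> 0 \<le> \<Theta> \<Longrightarrow> 0 < sat_rate \<gamma> \<theta> \<Theta>"
  unfolding sat_rate_def by (simp add: add_pos_nonneg)

lemma sat_rate_bounds:
  assumes "0 < \<gamma>" "\<gamma> \<le> \<theta>" "\<theta> \<le> \<Lambda>" "0 \<le> \<Theta>"
  shows "1 / (1 + \<Theta>) \<le> sat_rate \<gamma> \<theta> \<Theta>" "sat_rate \<gamma> \<theta> \<Theta> \<le> \<Lambda> / \<gamma> / (1 + \<Theta>)"
proof -
  have p: "0 < \<gamma> + \<theta> * \<Theta>" using assms by (simp add: add_pos_nonneg)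
  have "\<gamma> + \<theta> * \<Theta> \<le> \<theta> * (1 + \<Theta>)" using assms by (simp add: algebra_simps)
  then show "1 / (1 + \<Theta>) \<le> sat_rate \<gamma> \<theta> \<Theta>"
    unfolding sat_rate_def using p assms by (simp add: field_simps)
  have "\<gamma> * \<theta> \<le> \<Lambda> * \<gamma>" "\<gamma> * (\<theta> * \<Theta>) \<le> \<Lambda> * (\<theta> * \<Theta>)"
    using assms by (simp_all add: mult_right_mono)
  then have "\<gamma> * \<theta> * (1 + \<Theta>) \<le> \<Lambda> * (\<gamma> + \<theta> * \<Theta>)"
    by (simp add: algebra_simps)
  then show "sat_rate \<gamma> \<theta> \<Theta> \<le> \<Lambda> / \<gamma> / (1 + \<Theta>)"
    unfolding sat_rate_def using p assms by (simp add: divide_simps mult_ac add_pos_nonneg)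
qed

lemma sat_rate_strict_mono:
  assumes "0 < \<gamma>" "0 < \<theta>" "\<theta> < \<theta>'" "0 \<le> \<Theta>"
  shows "sat_rate \<gamma> \<theta> \<Theta> < sat_rate \<gamma> \<theta>' \<Theta>"
proof -
  have "0 < \<gamma> + \<theta> * \<Theta>" "0 < \<gamma> + \<theta>' * \<Theta>" using assms by (simp_all add: add_pos_nonneg)
  moreover have "\<theta> * (\<gamma> + \<theta>' * \<Theta>) < \<theta>' * (\<gamma> + \<theta> * \<Theta>)" using assms by (simp add: algebra_simps)
  ultimately show ?thesis unfolding sat_rate_def by (simp add: field_simps)
qed

lemma sat_rate_less_inverse: "0 < \<gamma> \<Longrightarrow> 0 \<le> \<theta> \<Longrightarrow> 0 < \<Theta> \<Longrightarrow> sat_rate \<gamma> \<theta> \<Theta> < 1 / \<Theta>"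
  unfolding sat_rate_def by (simp add: field_simps add_pos_nonneg)

lemma tendsto_sat_rate [tendsto_intros]:
  "(g \<longlongrightarrow> l) F \<Longrightarrow> \<gamma> + \<theta> * l \<noteq> 0 \<Longrightarrow> ((\<lambda>x. sat_rate \<gamma> \<theta> (g x)) \<longlongrightarrow> sat_rate \<gamma> \<theta> l) F"
  unfolding sat_rate_def by (intro tendsto_intros) auto

lemma continuous_on_sat_rate [continuous_intros]:
  "continuous_on S g \<Longrightarrow> (\<And>x. x \<in> S \<Longrightarrow> \<gamma> + \<theta> * g x \<noteq> 0) \<Longrightarrow>
    continuous_on S (\<lambda>x. sat_rate \<gamma> \<theta> (g x))"
  unfolding sat_rate_def by (intro continuous_intros) auto

locale sis_game =
  fixes D :: nat and m :: "nat \<Rightarrow> real" and n :: "nat \<Rightarrow> nat"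
    and s :: "nat \<Rightarrow> nat \<Rightarrow> real" and lam gam :: real
    and idx :: "nat \<Rightarrow> nat \<Rightarrow> 'i::finite" and xs :: "real ^ 'i"
  assumes D_pos: "D \<ge> 1"
    and m_pos: "\<forall>d\<in>{1..D}. 0 < m d"
    and n_pos: "\<forall>d\<in>{1..D}. n d \<ge> 1"
    and s_nonneg: "\<forall>d\<in>{1..D}. \<forall>i\<in>{1..n d}. 0 \<le> s d i"
    and s_mono: "\<forall>d\<in>{1..D}. \<forall>i\<in>{1..n d}. \<forall>j\<in>{1..n d}. i < j \<longrightarrow> s d i < s d j"
    and idx_inj: "inj_on (\<lambda>(d, i). idx d i) {(d, i). d \<in> {1..D} \<and> i \<in> {1..n d}}"
    and lam_pos: "lam > 0" and gam_pos: "gam > 0"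
    and theta_gt: "\<forall>d\<in>{1..D}. \<forall>i\<in>{1..n d}. lam * real d * (1 - s d i) > gam"
    and xs_state: "social_state D m n idx xs"
begin

abbreviation "\<theta> \<equiv> theta lam s"
abbreviation "\<phi> d i \<equiv> sat_rate gam (\<theta> d i)"
abbreviation "H \<equiv> Hfun D m n s lam gam idx"
abbreviation "davg \<equiv> dbar D m"

definition lin :: "real \<Rightarrow> real ^ 'i \<Rightarrow> real" where
  "lin \<Theta> v = (\<Sum>d=1..D. real d * (\<Sum>i=1..n d. \<phi> d i \<Theta> * v $ idx d i)) / davg"

definition secant :: "real \<Rightarrow> real \<Rightarrow> real ^ 'i \<Rightarrow> real" where
  "secant \<Theta> \<Theta>' y = - (\<Sum>d=1..D. real d * (\<Sum>i=1..n d. \<phi> d i \<Theta> * \<phi> d i \<Theta>' * y $ idx d i)) / davg"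

lemma theta_bounds:
  assumes "d \<in> {1..D}" "i \<in> {1..n d}"
  shows "gam < \<theta> d i" "\<theta> d i \<le> lam * D"
proof -
  show "gam < \<theta> d i" using theta_gt assms by (simp add: theta_def)
  have "\<theta> d i \<le> lam * real d"
    using s_nonneg assms lam_pos by (simp add: theta_def mult_left_le)
  also have "\<dots> \<le> lam * D" using assms lam_pos by simp
  finally show "\<theta> d i \<le> lam * D" .
qed

lemma phi_pos: "d \<in> {1..D} \<Longrightarrow> i \<in> {1..n d} \<Longrightarrow> 0 \<le> \<Theta> \<Longrightarrow> 0 < \<phi> d i \<Theta>"
  using theta_bounds(1) gam_pos by (intro sat_rate_pos) force+

lemma phi_bounds:
  assumes "d \<in> {1..D}" "i \<in> {1..n d}" "0 \<le> \<Theta>"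
  shows "1 / (1 + \<Theta>) \<le> \<phi> d i \<Theta>" "\<phi> d i \<Theta> \<le> lam * D / gam / (1 + \<Theta>)"
  using sat_rate_bounds[OF gam_pos _ theta_bounds(2)[OF assms(1,2)] assms(3)]
    theta_bounds(1)[OF assms(1,2)] by auto

lemma denom_nonzero:
  assumes "d \<in> {1..D}" "i \<in> {1..n d}" "0 \<le> \<Theta>"
  shows "gam + \<theta> d i * \<Theta> \<noteq> 0"
proof -
  have "0 < gam + \<theta> d i * \<Theta>"
    using theta_bounds(1)[OF assms(1,2)] gam_pos assms(3) by (intro add_pos_nonneg) auto
  then show ?thesis by simp
qed

lemma xs_nonneg: "d \<in> {1..D} \<Longrightarrow> i \<in> {1..n d} \<Longrightarrow> 0 \<le> xs $ idx d i"
  using xs_state unfolding social_state_def by auto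

lemma davg_eq: "davg = (\<Sum>d=1..D. real d * (\<Sum>i=1..n d. xs $ idx d i))"
  using xs_state unfolding dbar_def social_state_def by (intro sum.cong) auto

lemma davg_pos: "0 < davg"
proof -
  have "real 1 * m 1 \<le> davg"
    unfolding dbar_def using D_pos m_pos by (intro member_le_sum) (auto intro: less_imp_le)
  then show ?thesis using m_pos D_pos by force
qed

lemma H_eq_lin: "H \<Theta> y = lin \<Theta> y - 1"
  unfolding Hfun_def lin_def sat_rate_def by (simp add: mult.commute)

lemma lin_diff: "lin \<Theta> y - lin \<Theta> z = lin \<Theta> (y - z)"
  unfolding lin_def by (simp add: diff_divide_distrib sum_subtractf right_diff_distrib)

lemma H_diff_state: "H \<Theta> y - H \<Theta> z = lin \<Theta> (y - z)"
  unfolding H_eq_lin lin_diff[symmetric] by simp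

lemma secant_add: "secant \<Theta> \<Theta>' (y + z) = secant \<Theta> \<Theta>' y + secant \<Theta> \<Theta>' z"
  unfolding secant_def
  by (simp add: add_divide_distrib diff_divide_distrib sum.distrib distrib_left)

lemma H_secant:
  assumes "0 \<le> \<Theta>" "0 \<le> \<Theta>'"
  shows "H \<Theta>' y - H \<Theta> y = (\<Theta>' - \<Theta>) * secant \<Theta> \<Theta>' y"
proof -
  have diff: "(\<phi> d i \<Theta>' - \<phi> d i \<Theta>) * y $ idx d i = (\<Theta>' - \<Theta>) * - (\<phi> d i \<Theta> * \<phi> d i \<Theta>' * y $ idx d i)"
    if "d \<in> {1..D}" "i \<in> {1..n d}" for d i
    using denom_nonzero[OF that assms(1)] denom_nonzero[OF that assms(2)]
    by (simp add: sat_rate_diff algebra_simps)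
  have "H \<Theta>' y - H \<Theta> y =
      (\<Sum>d=1..D. real d * (\<Sum>i=1..n d. (\<phi> d i \<Theta>' - \<phi> d i \<Theta>) * y $ idx d i)) / davg"
    unfolding H_eq_lin lin_def
    by (simp add: diff_divide_distrib[symmetric] sum_subtractf[symmetric]
        right_diff_distrib[symmetric] left_diff_distrib[symmetric])
  also have "\<dots> = (\<Sum>d=1..D. real d * (\<Sum>i=1..n d.
      (\<Theta>' - \<Theta>) * - (\<phi> d i \<Theta> * \<phi> d i \<Theta>' * y $ idx d i))) / davg"
    using diff by (intro arg_cong[where f = "\<lambda>x. x / davg"] sum.cong refl
        arg_cong[where f = "(*) (real _)"]) auto
  also have "\<dots> = (\<Theta>' - \<Theta>) * secant \<Theta> \<Theta>' y"
    unfolding secant_def by (simp add: sum_negf sum_distrib_left mult.left_commute)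
  finally show ?thesis .
qed

lemma secant_xs_le:
  assumes "0 \<le> \<Theta>" "0 \<le> \<Theta>'"
  shows "secant \<Theta> \<Theta>' xs \<le> - (1 / ((1 + \<Theta>) * (1 + \<Theta>')))"
proof -
  let ?a = "1 / ((1 + \<Theta>) * (1 + \<Theta>'))"
  have bound: "?a \<le> \<phi> d i \<Theta> * \<phi> d i \<Theta>'" if "d \<in> {1..D}" "i \<in> {1..n d}" for d i
    using mult_mono[OF phi_bounds(1)[OF that assms(1)] phi_bounds(1)[OF that assms(2)]]
      phi_pos[OF that assms(1)] assms by simp
  have "?a * davg = (\<Sum>d=1..D. real d * (\<Sum>i=1..n d. ?a * xs $ idx d i))"
    unfolding davg_eq by (simp add: sum_distrib_left mult.left_commute)
  also have "\<dots> \<le> (\<Sum>d=1..D. real d * (\<Sum>i=1..n d. \<phi> d i \<Theta> * \<phi> d i \<Theta>' * xs $ idx d i))"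
    using bound xs_nonneg by (intro sum_mono mult_left_mono mult_right_mono) auto
  finally show ?thesis unfolding secant_def using davg_pos by (simp add: field_simps)
qed

lemma secant_abs_le:
  assumes "0 \<le> \<Theta>" "0 \<le> \<Theta>'"
  shows "\<bar>secant \<Theta> \<Theta>' v\<bar> \<le> (lam * D / gam)\<^sup>2 * (\<Sum>d=1..D. real d * real (n d)) * norm v
    / ((1 + \<Theta>) * (1 + \<Theta>')) / davg"
proof -
  define b where "b = lam * D / gam / (1 + \<Theta>) * (lam * D / gam / (1 + \<Theta>')) * norm v"
  have entry_bound: "\<bar>\<phi> d i \<Theta> * \<phi> d i \<Theta>' * v $ idx d i\<bar> \<le> b"
    if "d \<in> {1..D}" "i \<in> {1..n d}" for d i
  proof -
    have "\<bar>\<phi> d i \<Theta> * \<phi> d i \<Theta>' * v $ idx d i\<bar> = \<phi> d i \<Theta> * \<phi> d i \<Theta>' * \<bar>v $ idx d i\<bar>"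
      using phi_pos[OF that assms(1)] phi_pos[OF that assms(2)] by (simp add: abs_mult)
    also have "\<dots> \<le> b"
      unfolding b_def using phi_pos[OF that] phi_bounds(2)[OF that] assms lam_pos gam_pos
      by (intro mult_mono component_le_norm_cart) (auto intro: less_imp_le)
    finally show ?thesis .
  qed
  have "\<bar>\<Sum>d=1..D. real d * (\<Sum>i=1..n d. \<phi> d i \<Theta> * \<phi> d i \<Theta>' * v $ idx d i)\<bar>
      \<le> (\<Sum>d=1..D. real d * (\<Sum>i=1..n d. b))"
  proof (rule order_trans[OF sum_abs], intro sum_mono)
    fix d assume d: "d \<in> {1..D}"
    have "\<bar>\<Sum>i=1..n d. \<phi> d i \<Theta> * \<phi> d i \<Theta>' * v $ idx d i\<bar> \<le> (\<Sum>i=1..n d. b)"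
      using entry_bound[OF d] by (intro order_trans[OF sum_abs] sum_mono) auto
    then show "\<bar>real d * (\<Sum>i=1..n d. \<phi> d i \<Theta> * \<phi> d i \<Theta>' * v $ idx d i)\<bar>
        \<le> real d * (\<Sum>i=1..n d. b)"
      by (simp add: abs_mult mult_left_mono)
  qed
  also have "\<dots> = b * (\<Sum>d=1..D. real d * real (n d))"
    by (simp add: sum_distrib_left mult_ac)
  also have "\<dots> = (lam * D / gam)\<^sup>2 * (\<Sum>d=1..D. real d * real (n d)) * norm v
      / ((1 + \<Theta>) * (1 + \<Theta>'))"
    unfolding b_def by (simp add: power2_eq_square mult_ac)
  finally have "\<bar>\<Sum>d=1..D. real d * (\<Sum>i=1..n d. \<phi> d i \<Theta> * \<phi> d i \<Theta>' * v $ idx d i)\<bar>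
      \<le> (lam * D / gam)\<^sup>2 * (\<Sum>d=1..D. real d * real (n d)) * norm v / ((1 + \<Theta>) * (1 + \<Theta>'))" .
  from divide_right_mono[OF this, of davg] show ?thesis
    unfolding secant_def abs_divide abs_minus using davg_pos by simp
qed

definition radius :: real where
  "radius = davg / (2 * (lam * D / gam)\<^sup>2 * (\<Sum>d=1..D. real d * real (n d)))"

lemma radius_pos: "0 < radius"
proof -
  have "real 1 * real (n 1) \<le> (\<Sum>d=1..D. real d * real (n d))"
    using D_pos by (intro member_le_sum) auto
  then have "0 < (\<Sum>d=1..D. real d * real (n d))" using n_pos D_pos by force
  then show ?thesis unfolding radius_def using davg_pos lam_pos gam_pos D_pos by simp
qed

lemma secant_le_near_xs:
  assumes "0 \<le> \<Theta>" "0 \<le> \<Theta>'" "norm (y - xs) \<le> radius"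
  shows "secant \<Theta> \<Theta>' y \<le> - (1 / (2 * ((1 + \<Theta>) * (1 + \<Theta>'))))"
proof -
  define c where "c = (lam * D / gam)\<^sup>2 * (\<Sum>d=1..D. real d * real (n d))"
  define P where "P = (1 + \<Theta>) * (1 + \<Theta>')"
  have r: "radius = davg / (2 * c)" unfolding radius_def c_def by (simp add: mult.assoc)
  have "0 < c" using radius_pos davg_pos unfolding r by (simp add: zero_less_divide_iff)
  then have "c * norm (y - xs) \<le> davg / 2"
    using assms(3) unfolding r by (simp add: field_simps)
  then have "c * norm (y - xs) / P / davg \<le> davg / 2 / P / davg"
    using assms davg_pos unfolding P_def by (intro divide_right_mono) auto
  also have "\<dots> = 1 / (2 * P)" using davg_pos by simp
  finally have "\<bar>secant \<Theta> \<Theta>' (y - xs)\<bar> \<le> 1 / (2 * P)"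
    using secant_abs_le[OF assms(1,2), of "y - xs"] unfolding c_def P_def by linarith
  moreover have "secant \<Theta> \<Theta>' y = secant \<Theta> \<Theta>' xs + secant \<Theta> \<Theta>' (y - xs)"
    using secant_add[of \<Theta> \<Theta>' xs "y - xs"] by simp
  moreover have "1 / P = 2 * (1 / (2 * P))" by simp
  ultimately show ?thesis
    using secant_xs_le[OF assms(1,2)] abs_ge_self[of "secant \<Theta> \<Theta>' (y - xs)"]
    unfolding P_def[symmetric] by linarith
qed

lemma H_strict_antimono:
  assumes "norm (y - xs) \<le> radius" "0 \<le> \<Theta>" "\<Theta> < \<Theta>'"
  shows "H \<Theta>' y < H \<Theta> y"
proof -
  have "0 < 1 / (2 * ((1 + \<Theta>) * (1 + \<Theta>')))" using assms by simp
  moreover have "secant \<Theta> \<Theta>' y \<le> - (1 / (2 * ((1 + \<Theta>) * (1 + \<Theta>'))))"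
    using assms by (intro secant_le_near_xs) auto
  ultimately have "secant \<Theta> \<Theta>' y < 0" by linarith
  then have "(\<Theta>' - \<Theta>) * secant \<Theta> \<Theta>' y < 0" using assms by (simp add: mult_pos_neg)
  then show ?thesis using H_secant[of \<Theta> \<Theta>' y] assms by simp
qed

lemma H_root_unique:
  assumes "norm (y - xs) \<le> radius" "0 \<le> \<Theta>" "0 \<le> \<Theta>'" "H \<Theta> y = 0" "H \<Theta>' y = 0"
  shows "\<Theta> = \<Theta>'"
  using H_strict_antimono[OF assms(1,2), of \<Theta>'] H_strict_antimono[OF assms(1,3), of \<Theta>] assms(4,5)
  by (cases \<Theta> \<Theta>' rule: linorder_cases) auto

lemma continuous_on_H_Theta: "continuous_on {0..} (\<lambda>\<Theta>. H \<Theta> y)"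
  unfolding H_eq_lin lin_def using davg_pos denom_nonzero by (intro continuous_intros) auto

lemma continuous_on_H_state: "continuous_on UNIV (H \<Theta>)"
  unfolding H_eq_lin lin_def using davg_pos by (intro continuous_intros) auto

lemma H_zero_pos: "0 < H 0 xs"
proof -
  have scaled: "x \<le> \<phi> d i 0 * x" "0 < x \<Longrightarrow> x < \<phi> d i 0 * x"
    if "d \<in> {1..D}" "i \<in> {1..n d}" "0 \<le> x" for d i x
  proof -
    have "1 < \<phi> d i 0" using theta_bounds(1)[OF that(1,2)] gam_pos by (simp add: sat_rate_def)
    then show "x \<le> \<phi> d i 0 * x" "0 < x \<Longrightarrow> x < \<phi> d i 0 * x"
      using that(3) mult_right_mono[of 1 "\<phi> d i 0" x] by auto
  qed
  have inner_le: "(\<Sum>i=1..n d. xs $ idx d i) \<le> (\<Sum>i=1..n d. \<phi> d i 0 * xs $ idx d i)"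
    if "d \<in> {1..D}" for d
    using scaled(1)[OF that] xs_nonneg[OF that] by (intro sum_mono) auto
  obtain i0 where i0: "i0 \<in> {1..n 1}" "0 < xs $ idx 1 i0"
  proof -
    have "0 < (\<Sum>i=1..n 1. xs $ idx 1 i)"
      using xs_state m_pos D_pos unfolding social_state_def by auto
    then show ?thesis using that by (meson not_le sum_nonpos)
  qed
  have "(\<Sum>i=1..n 1. xs $ idx 1 i) < (\<Sum>i=1..n 1. \<phi> 1 i 0 * xs $ idx 1 i)"
    using i0 D_pos scaled xs_nonneg by (intro sum_strict_mono_ex1) (auto intro!: bexI[of _ i0])
  then have "davg < (\<Sum>d=1..D. real d * (\<Sum>i=1..n d. \<phi> d i 0 * xs $ idx d i))"
    unfolding davg_eq using D_pos inner_le
    by (intro sum_strict_mono_ex1) (auto intro!: mult_left_mono bexI[of _ 1])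
  then show ?thesis unfolding H_eq_lin lin_def using davg_pos by simp
qed

lemma H_two_neg: "H 2 xs < 0"
proof -
  have "(\<Sum>d=1..D. real d * (\<Sum>i=1..n d. \<phi> d i 2 * xs $ idx d i))
      \<le> (\<Sum>d=1..D. real d * (\<Sum>i=1..n d. 1 / 2 * xs $ idx d i))"
  proof (intro sum_mono mult_left_mono mult_right_mono)
    fix d i assume di: "d \<in> {1..D}" "i \<in> {1..n d}"
    then have "0 \<le> \<theta> d i" using theta_bounds(1) gam_pos by force
    then show "\<phi> d i 2 \<le> 1 / 2"
      using sat_rate_less_inverse[OF gam_pos, of "\<theta> d i" 2] by simp
    show "0 \<le> xs $ idx d i" using xs_nonneg[OF di] .
  qed auto
  also have "\<dots> = davg / 2"
    unfolding davg_eq by (simp add: sum_distrib_left sum_divide_distrib mult_ac)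
  finally show ?thesis unfolding H_eq_lin lin_def using davg_pos by simp
qed

abbreviation "\<Theta>s \<equiv> Theta_bar D m n s lam gam idx xs"

lemma Theta_bar_root: "0 < \<Theta>s" "H \<Theta>s xs = 0"
proof -
  obtain t where t: "0 \<le> t" "t \<le> 2" "H t xs = 0"
    using IVT2'[of "\<lambda>\<Theta>. H \<Theta> xs" 2 0 0] H_zero_pos H_two_neg
      continuous_on_subset[OF continuous_on_H_Theta, of "{0..2}"] by auto
  have "0 < t" using t H_zero_pos by (cases "t = 0") auto
  have "\<Theta>s = t" unfolding Theta_bar_def
  proof (rule the_equality)
    show "0 < t \<and> H t xs = 0" using \<open>0 < t\<close> t by auto
    show "u = t" if "0 < u \<and> H u xs = 0" for u
      using that H_root_unique[of xs u t] t radius_pos by auto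
  qed
  then show "0 < \<Theta>s" "H \<Theta>s xs = 0" using \<open>0 < t\<close> t by auto
qed

lemma H_chain:
  assumes g: "(g has_real_derivative p) (at 0)" and g0: "0 \<le> g 0"
  shows "((\<lambda>t. H (g t) (y + t *\<^sub>R v)) has_real_derivative lin (g 0) v + p * secant (g 0) (g 0) y)
    (at 0)"
proof -
  have entry: "((\<lambda>t. \<phi> d i (g t) * (y + t *\<^sub>R v) $ idx d i) has_real_derivative
      \<phi> d i (g 0) * v $ idx d i - \<phi> d i (g 0) * \<phi> d i (g 0) * y $ idx d i * p) (at 0)"
    if "d \<in> {1..D}" "i \<in> {1..n d}" for d i
  proof -
    have "((\<lambda>t. \<phi> d i (g t)) has_real_derivative - (\<phi> d i (g 0))\<^sup>2 * p) (at 0)"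
      using DERIV_chain2[OF sat_rate_deriv[OF denom_nonzero[OF that g0]] g] by simp
    moreover have "((\<lambda>t. (y + t *\<^sub>R v) $ idx d i) has_real_derivative v $ idx d i) (at 0)"
      by (auto intro!: derivative_eq_intros)
    ultimately show ?thesis
      by (rule DERIV_mult[THEN DERIV_cong]) (simp add: power2_eq_square algebra_simps)
  qed
  have "((\<lambda>t. lin (g t) (y + t *\<^sub>R v)) has_real_derivative
      (\<Sum>d=1..D. real d * (\<Sum>i=1..n d. \<phi> d i (g 0) * v $ idx d i
        - \<phi> d i (g 0) * \<phi> d i (g 0) * y $ idx d i * p)) / davg) (at 0)"
    unfolding lin_def by (intro DERIV_cdivide DERIV_sum DERIV_cmult entry) auto
  moreover have "(\<Sum>d=1..D. real d * (\<Sum>i=1..n d. \<phi> d i (g 0) * v $ idx d i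
        - \<phi> d i (g 0) * \<phi> d i (g 0) * y $ idx d i * p)) / davg
      = lin (g 0) v + p * secant (g 0) (g 0) y"
    unfolding lin_def secant_def
    by (simp add: sum_subtractf right_diff_distrib diff_divide_distrib sum_distrib_left
        sum_distrib_right mult_ac)
  ultimately have "((\<lambda>t. lin (g t) (y + t *\<^sub>R v)) has_real_derivative
      lin (g 0) v + p * secant (g 0) (g 0) y) (at 0)" by simp
  from DERIV_diff[OF this DERIV_const[of 1]] show ?thesis unfolding H_eq_lin by simp
qed

lemma H_has_derivative_Theta:
  assumes "0 \<le> \<Theta>"
  shows "((\<lambda>\<Theta>. H \<Theta> y) has_real_derivative secant \<Theta> \<Theta> y) (at \<Theta>)"
proof -
  have "((\<lambda>t. \<Theta> + t) has_real_derivative 1) (at 0)" by (auto intro!: derivative_eq_intros)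
  from H_chain[OF this, of y 0] assms
  have "((\<lambda>t. H (\<Theta> + t) y) has_real_derivative secant \<Theta> \<Theta> y) (at 0)"
    by (simp add: lin_def)
  then show ?thesis using DERIV_shift[of "\<lambda>\<Theta>. H \<Theta> y" _ 0 \<Theta>] by (simp add: add.commute)
qed

definition lin_vec :: "real \<Rightarrow> real ^ 'i" where
  "lin_vec \<Theta> = (\<Sum>d=1..D. \<Sum>i=1..n d. (real d * \<phi> d i \<Theta> / davg) *\<^sub>R axis (idx d i) 1)"

lemma lin_eq_inner: "lin \<Theta> v = v \<bullet> lin_vec \<Theta>"
  unfolding lin_def lin_vec_def
  by (simp add: inner_sum_right inner_axis sum_distrib_left sum_divide_distrib mult_ac)

lemma lin_abs_le: "\<bar>lin \<Theta> v\<bar> \<le> norm (lin_vec \<Theta>) * norm v"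
  unfolding lin_eq_inner using Cauchy_Schwarz_ineq2[of v "lin_vec \<Theta>"] by (simp add: mult.commute)

lemma lin_axis:
  assumes "c \<in> {1..D}" "l \<in> {1..n c}"
  shows "lin \<Theta> (axis (idx c l) 1) = real c * \<phi> c l \<Theta> / davg"
proof -
  have idx_eq: "idx d i = idx c l \<longleftrightarrow> d = c \<and> i = l" if "d \<in> {1..D}" "i \<in> {1..n d}" for d i
    using inj_onD[OF idx_inj, of "(d, i)" "(c, l)"] that assms by auto
  have "(\<Sum>d=1..D. real d * (\<Sum>i=1..n d. \<phi> d i \<Theta> * axis (idx c l) 1 $ idx d i))
      = (\<Sum>d=1..D. if d = c then real c * \<phi> c l \<Theta> else 0)"
    using assms
    by (intro sum.cong refl) (auto simp: axis_def idx_eq if_distrib sum.delta cong: if_cong)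
  also have "\<dots> = real c * \<phi> c l \<Theta>" using assms by simp
  finally show ?thesis unfolding lin_def by simp
qed

definition nbhd :: "(real ^ 'i) set" where
  "nbhd = ball xs radius \<inter> {y. 0 < H (\<Theta>s / 2) y} \<inter> {y. H (2 * \<Theta>s) y < 0}"

definition theta_sol :: "real ^ 'i \<Rightarrow> real" where
  "theta_sol y = (THE \<Theta>. 0 < \<Theta> \<and> H \<Theta> y = 0)"

lemma open_nbhd: "open nbhd"
  unfolding nbhd_def
  by (intro open_Int open_ball open_Collect_less continuous_on_H_state[THEN continuous_on_subset])
    (auto intro: continuous_intros)

lemma xs_in_nbhd: "xs \<in> nbhd"
proof -
  have "H (2 * \<Theta>s) xs < H \<Theta>s xs" "H \<Theta>s xs < H (\<Theta>s / 2) xs"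
    using Theta_bar_root(1) radius_pos by (auto intro!: H_strict_antimono)
  then show ?thesis unfolding nbhd_def using Theta_bar_root(2) radius_pos by simp
qed

lemma nbhd_near_xs: "y \<in> nbhd \<Longrightarrow> norm (y - xs) \<le> radius"
  unfolding nbhd_def by (simp add: dist_norm norm_minus_commute)

lemma theta_sol_in_nbhd:
  assumes "y \<in> nbhd"
  shows "0 < theta_sol y" "H (theta_sol y) y = 0" "\<Theta>s / 2 \<le> theta_sol y" "theta_sol y \<le> 2 * \<Theta>s"
proof -
  have "H (2 * \<Theta>s) y \<le> 0" "0 \<le> H (\<Theta>s / 2) y" using assms unfolding nbhd_def by auto
  then obtain t where t: "\<Theta>s / 2 \<le> t" "t \<le> 2 * \<Theta>s" "H t y = 0"
    using IVT2'[of "\<lambda>\<Theta>. H \<Theta> y" "2 * \<Theta>s" 0 "\<Theta>s / 2"] Theta_bar_root(1)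
      continuous_on_subset[OF continuous_on_H_Theta, of "{\<Theta>s / 2..2 * \<Theta>s}"] by auto
  have "theta_sol y = t" unfolding theta_sol_def
  proof (rule the_equality)
    show "0 < t \<and> H t y = 0" using t Theta_bar_root(1) by auto
    show "u = t" if "0 < u \<and> H u y = 0" for u
      using that t Theta_bar_root(1) H_root_unique[OF nbhd_near_xs[OF assms], of u t] by auto
  qed
  then show "0 < theta_sol y" "H (theta_sol y) y = 0" "\<Theta>s / 2 \<le> theta_sol y" "theta_sol y \<le> 2 * \<Theta>s"
    using t Theta_bar_root(1) by auto
qed

lemma theta_sol_xs: "theta_sol xs = \<Theta>s"
  using H_root_unique[of xs "theta_sol xs" \<Theta>s] theta_sol_in_nbhd[OF xs_in_nbhd] Theta_bar_root
    radius_pos by auto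

lemma implicit_sol_eq_theta_sol:
  assumes "implicit_sol D m n s lam gam idx nbhd xs \<Theta>s g" "y \<in> nbhd"
  shows "g y = theta_sol y"
  using assms theta_sol_in_nbhd[OF assms(2)]
    H_root_unique[OF nbhd_near_xs[OF assms(2)], of "g y" "theta_sol y"]
  unfolding implicit_sol_def by auto

definition slope_bound :: real where
  "slope_bound = 1 / (2 * (1 + 2 * \<Theta>s)\<^sup>2)"

lemma slope_bound_pos: "0 < slope_bound"
  unfolding slope_bound_def using Theta_bar_root(1) by simp

lemma secant_nbhd_le:
  assumes "y \<in> nbhd" "0 \<le> \<Theta>" "\<Theta> \<le> 2 * \<Theta>s" "0 \<le> \<Theta>'" "\<Theta>' \<le> 2 * \<Theta>s"
  shows "secant \<Theta> \<Theta>' y \<le> - slope_bound"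
proof -
  have "(1 + \<Theta>) * (1 + \<Theta>') \<le> (1 + 2 * \<Theta>s)\<^sup>2"
    unfolding power2_eq_square using assms by (intro mult_mono) auto
  then have "slope_bound \<le> 1 / (2 * ((1 + \<Theta>) * (1 + \<Theta>')))"
    unfolding slope_bound_def using assms by (intro divide_left_mono mult_left_mono) auto
  then show ?thesis using secant_le_near_xs[OF assms(2,4) nbhd_near_xs[OF assms(1)]] by linarith
qed

lemma theta_sol_secant_le:
  assumes "y0 \<in> nbhd" "y \<in> nbhd"
  shows "secant (theta_sol y0) (theta_sol y) y \<le> - slope_bound"
  using theta_sol_in_nbhd[OF assms(1)] theta_sol_in_nbhd[OF assms(2)]
  by (intro secant_nbhd_le assms) auto

lemma theta_sol_diff:
  assumes "y0 \<in> nbhd" "y \<in> nbhd"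
  shows "theta_sol y - theta_sol y0
    = - lin (theta_sol y0) (y - y0) / secant (theta_sol y0) (theta_sol y) y"
proof -
  note r0 = theta_sol_in_nbhd[OF assms(1)] and r = theta_sol_in_nbhd[OF assms(2)]
  have "0 = (H (theta_sol y) y - H (theta_sol y0) y) + (H (theta_sol y0) y - H (theta_sol y0) y0)"
    using r0 r by simp
  also have "\<dots> = (theta_sol y - theta_sol y0) * secant (theta_sol y0) (theta_sol y) y
      + lin (theta_sol y0) (y - y0)"
    using r0 r H_secant[of "theta_sol y0" "theta_sol y" y] H_diff_state[of "theta_sol y0" y y0]
    by simp
  finally have "(theta_sol y - theta_sol y0) * secant (theta_sol y0) (theta_sol y) y
      = - lin (theta_sol y0) (y - y0)"
    by linarith
  moreover have "secant (theta_sol y0) (theta_sol y) y \<noteq> 0"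
    using theta_sol_secant_le[OF assms] slope_bound_pos by linarith
  ultimately show ?thesis by (simp add: field_simps)
qed

lemma tendsto_secant:
  assumes "(f \<longlongrightarrow> a) F" "(g \<longlongrightarrow> b) F" "(Y \<longlongrightarrow> y) F" "0 \<le> a" "0 \<le> b"
  shows "((\<lambda>x. secant (f x) (g x) (Y x)) \<longlongrightarrow> secant a b y) F"
  unfolding secant_def using assms davg_pos denom_nonzero
  by (intro tendsto_intros tendsto_vec_nth) auto

lemma theta_sol_dist_le:
  assumes "y0 \<in> nbhd" "y \<in> nbhd"
  shows "\<bar>theta_sol y - theta_sol y0\<bar> \<le> norm (lin_vec (theta_sol y0)) / slope_bound * norm (y - y0)"
proof -
  have "\<bar>theta_sol y - theta_sol y0\<bar>
      = \<bar>lin (theta_sol y0) (y - y0)\<bar> / \<bar>secant (theta_sol y0) (theta_sol y) y\<bar>"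
    using theta_sol_diff[OF assms] by (simp add: abs_divide)
  also have "\<dots> \<le> \<bar>lin (theta_sol y0) (y - y0)\<bar> / slope_bound"
  proof (rule divide_left_mono)
    show "slope_bound \<le> \<bar>secant (theta_sol y0) (theta_sol y) y\<bar>"
      using theta_sol_secant_le[OF assms] by linarith
    then show "0 < \<bar>secant (theta_sol y0) (theta_sol y) y\<bar> * slope_bound"
      using slope_bound_pos by simp
  qed simp
  also have "\<dots> \<le> norm (lin_vec (theta_sol y0)) / slope_bound * norm (y - y0)"
    using lin_abs_le slope_bound_pos by (simp add: divide_right_mono)
  finally show ?thesis .
qed

lemma theta_sol_tendsto:
  assumes y0: "y0 \<in> nbhd"
  shows "(theta_sol \<longlongrightarrow> theta_sol y0) (at y0)"
proof -
  define C where "C = norm (lin_vec (theta_sol y0)) / slope_bound"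
  have "eventually (\<lambda>y. y \<in> nbhd) (at y0)" by (rule eventually_at_in_open'[OF open_nbhd y0])
  then have "eventually (\<lambda>y. norm (theta_sol y - theta_sol y0) \<le> C * norm (y - y0)) (at y0)"
    unfolding C_def using theta_sol_dist_le[OF y0] by (auto elim!: eventually_mono)
  moreover have "((\<lambda>y. C * norm (y - y0)) \<longlongrightarrow> 0) (at y0)"
    by (auto intro!: tendsto_eq_intros)
  ultimately have "((\<lambda>y. theta_sol y - theta_sol y0) \<longlongrightarrow> 0) (at y0)"
    by (rule Lim_null_comparison)
  then show ?thesis by (simp add: LIM_zero_iff)
qed

lemma continuous_on_theta_sol: "continuous_on nbhd theta_sol"
  using theta_sol_tendsto by (intro continuous_at_imp_continuous_on) (simp add: isCont_def)

definition theta_sol_deriv :: "real ^ 'i \<Rightarrow> (real ^ 'i) \<Rightarrow>\<^sub>L real" where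
  "theta_sol_deriv y =
    (- 1 / secant (theta_sol y) (theta_sol y) y) *\<^sub>R blinfun_inner_left (lin_vec (theta_sol y))"

lemma theta_sol_deriv_apply:
  "blinfun_apply (theta_sol_deriv y) v
    = - lin (theta_sol y) v / secant (theta_sol y) (theta_sol y) y"
  unfolding theta_sol_deriv_def lin_eq_inner
  by (simp add: blinfun.minus_left blinfun.scaleR_left divide_inverse mult.commute)

lemma theta_sol_remainder_le:
  assumes y0: "y0 \<in> nbhd" and y: "y \<in> nbhd"
  shows "norm ((theta_sol y - theta_sol y0 - blinfun_apply (theta_sol_deriv y0) (y - y0))
      /\<^sub>R norm (y - y0))
    \<le> norm (lin_vec (theta_sol y0))
      * \<bar>1 / secant (theta_sol y0) (theta_sol y) y - 1 / secant (theta_sol y0) (theta_sol y0) y0\<bar>"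
    (is "_ \<le> _ * ?q")
proof -
  have "theta_sol y - theta_sol y0 - blinfun_apply (theta_sol_deriv y0) (y - y0)
      = - lin (theta_sol y0) (y - y0)
        * (1 / secant (theta_sol y0) (theta_sol y) y - 1 / secant (theta_sol y0) (theta_sol y0) y0)"
    unfolding theta_sol_diff[OF y0 y] theta_sol_deriv_apply by (simp add: algebra_simps)
  then have "norm ((theta_sol y - theta_sol y0 - blinfun_apply (theta_sol_deriv y0) (y - y0))
      /\<^sub>R norm (y - y0)) = \<bar>lin (theta_sol y0) (y - y0)\<bar> / norm (y - y0) * ?q"
    by (simp add: abs_mult divide_inverse mult_ac)
  also have "\<dots> \<le> norm (lin_vec (theta_sol y0)) * ?q"
  proof (rule mult_right_mono)
    show "\<bar>lin (theta_sol y0) (y - y0)\<bar> / norm (y - y0) \<le> norm (lin_vec (theta_sol y0))"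
      using lin_abs_le[of "theta_sol y0" "y - y0"] by (cases "y = y0") (simp_all add: divide_simps)
  qed simp
  finally show ?thesis .
qed

lemma theta_sol_has_derivative:
  assumes y0: "y0 \<in> nbhd"
  shows "(theta_sol has_derivative blinfun_apply (theta_sol_deriv y0)) (at y0)"
  unfolding has_derivative_at_within
proof (intro conjI)
  show "bounded_linear (blinfun_apply (theta_sol_deriv y0))" by (rule blinfun.bounded_linear_right)
  define A where "A y = secant (theta_sol y0) (theta_sol y) y" for y
  define C where "C = norm (lin_vec (theta_sol y0))"
  have "eventually (\<lambda>y. y \<in> nbhd) (at y0)" by (rule eventually_at_in_open'[OF open_nbhd y0])
  then have "eventually (\<lambda>y. norm ((theta_sol y - theta_sol y0
      - blinfun_apply (theta_sol_deriv y0) (y - y0)) /\<^sub>R norm (y - y0))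
      \<le> C * \<bar>1 / A y - 1 / A y0\<bar>) (at y0)"
    unfolding A_def C_def using theta_sol_remainder_le[OF y0] by (auto elim!: eventually_mono)
  moreover have "(A \<longlongrightarrow> A y0) (at y0)"
    unfolding A_def using theta_sol_in_nbhd(1)[OF y0]
    by (intro tendsto_secant theta_sol_tendsto[OF y0] tendsto_ident_at tendsto_const) auto
  then have "((\<lambda>y. C * \<bar>1 / A y - 1 / A y0\<bar>) \<longlongrightarrow> 0) (at y0)"
    using theta_sol_secant_le[OF y0 y0] slope_bound_pos unfolding A_def
    by (auto intro!: tendsto_eq_intros)
  ultimately show "((\<lambda>y. (theta_sol y - theta_sol y0 - blinfun_apply (theta_sol_deriv y0) (y - y0))
      /\<^sub>R norm (y - y0)) \<longlongrightarrow> 0) (at y0)"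
    by (rule Lim_null_comparison)
qed

lemma continuous_on_theta_sol_deriv: "continuous_on nbhd theta_sol_deriv"
proof -
  have nonneg: "y \<in> nbhd \<Longrightarrow> 0 \<le> theta_sol y" for y using theta_sol_in_nbhd(1) by force
  have "continuous_on nbhd (\<lambda>y. secant (theta_sol y) (theta_sol y) y)"
    unfolding secant_def using davg_pos denom_nonzero nonneg
    by (intro continuous_intros continuous_on_theta_sol) auto
  moreover have "continuous_on nbhd (\<lambda>y. lin_vec (theta_sol y))"
    unfolding lin_vec_def using davg_pos denom_nonzero nonneg
    by (intro continuous_intros continuous_on_theta_sol) auto
  moreover have "y \<in> nbhd \<Longrightarrow> secant (theta_sol y) (theta_sol y) y \<noteq> 0" for y
    using theta_sol_secant_le[of y y] slope_bound_pos by force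
  ultimately show ?thesis unfolding theta_sol_deriv_def by (intro continuous_intros) auto
qed

lemma implicit_sol_theta_sol: "implicit_sol D m n s lam gam idx nbhd xs \<Theta>s theta_sol"
  unfolding implicit_sol_def
  using theta_sol_has_derivative continuous_on_theta_sol_deriv theta_sol_in_nbhd theta_sol_xs
  by blast

lemma secant_Theta_bar_neg: "secant \<Theta>s \<Theta>s xs < 0"
  using theta_sol_secant_le[OF xs_in_nbhd xs_in_nbhd] slope_bound_pos theta_sol_xs by simp

lemma implicit_sol_directional_deriv:
  assumes N: "open N" "xs \<in> N" and h: "implicit_sol D m n s lam gam idx N xs \<Theta>s h"
  shows "((\<lambda>t. h (xs + t *\<^sub>R e)) has_real_derivative - lin \<Theta>s e / secant \<Theta>s \<Theta>s xs) (at 0)"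
proof -
  obtain h' where h': "\<forall>y\<in>N. (h has_derivative blinfun_apply (h' y)) (at y)"
    and h_xs: "h xs = \<Theta>s" and h_root: "\<forall>y\<in>N. H (h y) y = 0"
    using h unfolding implicit_sol_def by blast
  define p where "p = blinfun_apply (h' xs) e"
  have "((h \<circ> (\<lambda>t. xs + t *\<^sub>R e)) has_derivative (blinfun_apply (h' xs) \<circ> (\<lambda>t. t *\<^sub>R e))) (at 0)"
    by (rule diff_chain_at) (auto intro!: derivative_eq_intros simp: h' N)
  moreover have "blinfun_apply (h' xs) \<circ> (\<lambda>t. t *\<^sub>R e) = (*) p"
    unfolding p_def by (auto simp: blinfun.scaleR_right)
  ultimately have g: "((\<lambda>t. h (xs + t *\<^sub>R e)) has_real_derivative p) (at 0)"
    unfolding has_field_derivative_def by (simp add: o_def)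
  have "((\<lambda>t. xs + t *\<^sub>R e) \<longlongrightarrow> xs) (nhds 0)"
    by (auto intro!: tendsto_eq_intros filterlim_ident)
  then have "eventually (\<lambda>t. xs + t *\<^sub>R e \<in> N) (nhds 0)" by (rule topological_tendstoD[OF _ N])
  then have "eventually (\<lambda>t. H (h (xs + t *\<^sub>R e)) (xs + t *\<^sub>R e) = 0) (nhds 0)"
    by (rule eventually_mono) (use h_root in blast)
  from DERIV_cong_ev[OF refl this refl]
  have "((\<lambda>t. H (h (xs + t *\<^sub>R e)) (xs + t *\<^sub>R e)) has_real_derivative 0) (at 0)" by simp
  moreover have "((\<lambda>t. H (h (xs + t *\<^sub>R e)) (xs + t *\<^sub>R e)) has_real_derivative
      lin \<Theta>s e + p * secant \<Theta>s \<Theta>s xs) (at 0)"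
    using H_chain[OF g] h_xs Theta_bar_root(1) by simp
  ultimately have "0 = lin \<Theta>s e + p * secant \<Theta>s \<Theta>s xs" by (rule DERIV_unique)
  then have "p = - lin \<Theta>s e / secant \<Theta>s \<Theta>s xs"
    using secant_Theta_bar_neg by (auto simp: field_simps)
  with g show ?thesis by simp
qed

lemma payoff_slope_factor:
  assumes "d \<in> {1..D}" "k \<in> {1..n d}"
  shows "(1 - s d k) * (gam / \<theta> d k) = gam / (lam * d)"
proof -
  have "1 - s d k \<noteq> 0" "real d \<noteq> 0"
    using theta_bounds(1)[OF assms] gam_pos assms by (auto simp: theta_def)
  then show ?thesis using lam_pos by (simp add: theta_def)
qed

lemma partial_payoff:
  assumes N: "open N" "xs \<in> N" and h: "implicit_sol D m n s lam gam idx N xs \<Theta>s h"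
    and dk: "d \<in> {1..D}" "k \<in> {1..n d}"
  shows "partial (payoff s r lam gam h d k) xs j
    = gam / (lam * d) * (\<phi> d k \<Theta>s)\<^sup>2 * lin \<Theta>s (axis j 1) / secant \<Theta>s \<Theta>s xs"
proof -
  define p where "p = - lin \<Theta>s (axis j 1) / secant \<Theta>s \<Theta>s xs"
  have g: "((\<lambda>t. h (xs + t *\<^sub>R axis j 1)) has_real_derivative p) (at 0)"
    unfolding p_def by (rule implicit_sol_directional_deriv[OF N h])
  have h_xs: "h xs = \<Theta>s" using h unfolding implicit_sol_def by blast
  have q: "gam + \<theta> d k * \<Theta>s \<noteq> 0" using denom_nonzero[OF dk] Theta_bar_root(1) by simp
  have "((\<lambda>t. \<theta> d k * h (xs + t *\<^sub>R axis j 1) / (gam + \<theta> d k * h (xs + t *\<^sub>R axis j 1)))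
      has_real_derivative gam / (\<theta> d k) * (\<phi> d k \<Theta>s)\<^sup>2 * p) (at 0)"
    by (rule derivative_eq_intros g refl)+
      (use q h_xs in \<open>auto simp: sat_rate_def divide_simps power2_eq_square algebra_simps\<close>)
  from DERIV_diff[OF DERIV_const DERIV_cmult[OF this, of "1 - s d k"], of "s d k * r"]
  have payoff_deriv: "((\<lambda>t. payoff s r lam gam h d k (xs + t *\<^sub>R axis j 1)) has_real_derivative
      0 - (1 - s d k) * (gam / (\<theta> d k) * (\<phi> d k \<Theta>s)\<^sup>2 * p)) (at 0)"
    unfolding payoff_def .
  have "0 - (1 - s d k) * (gam / (\<theta> d k) * (\<phi> d k \<Theta>s)\<^sup>2 * p)
      = - ((1 - s d k) * (gam / \<theta> d k)) * (\<phi> d k \<Theta>s)\<^sup>2 * p"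
    by (simp add: algebra_simps)
  also have "\<dots> = gam / (lam * d) * (\<phi> d k \<Theta>s)\<^sup>2 * lin \<Theta>s (axis j 1) / secant \<Theta>s \<Theta>s xs"
    unfolding payoff_slope_factor[OF dk] p_def by simp
  finally have "((\<lambda>t. payoff s r lam gam h d k (xs + t *\<^sub>R axis j 1)) has_real_derivative
      gam / (lam * d) * (\<phi> d k \<Theta>s)\<^sup>2 * lin \<Theta>s (axis j 1) / secant \<Theta>s \<Theta>s xs) (at 0)"
    using payoff_deriv by simp
  then show ?thesis unfolding partial_def by (rule DERIV_imp_deriv)
qed

lemma phi_step:
  assumes "d \<in> {1..D}" "k \<in> {1..n d - 1}" "0 \<le> \<Theta>"
  shows "\<phi> d (k + 1) \<Theta> < \<phi> d k \<Theta>"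
proof -
  have k: "k \<in> {1..n d}" "k + 1 \<in> {1..n d}" using assms by auto
  have "\<theta> d (k + 1) < \<theta> d k"
    using s_mono assms(1) k lam_pos by (simp add: theta_def)
  then show ?thesis
    using theta_bounds(1)[OF assms(1) k(2)] gam_pos assms(3) by (intro sat_rate_strict_mono) auto
qed

lemma submodular:
  assumes N: "open N" "xs \<in> N" and h: "implicit_sol D m n s lam gam idx N xs \<Theta>s h"
    and d: "d \<in> {1..D}" "k \<in> {1..n d - 1}" and c: "c \<in> {1..D}" "l \<in> {1..n c - 1}"
  shows "partial (payoff s r lam gam h d (k+1)) xs (idx c (l+1))
       - partial (payoff s r lam gam h d k) xs (idx c (l+1))
       - partial (payoff s r lam gam h d (k+1)) xs (idx c l)
       + partial (payoff s r lam gam h d k) xs (idx c l) \<le> 0"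
proof -
  define G where "G k' = gam / (lam * d) * (\<phi> d k' \<Theta>s)\<^sup>2" for k'
  define Q where "Q l' = real c * \<phi> c l' \<Theta>s / davg" for l'
  define A where "A = secant \<Theta>s \<Theta>s xs"
  have P: "partial (payoff s r lam gam h d k') xs (idx c l') = G k' * Q l' / A"
    if "k' \<in> {1..n d}" "l' \<in> {1..n c}" for k' l'
    unfolding G_def Q_def A_def partial_payoff[OF N h d(1) that(1)] lin_axis[OF c(1) that(2)] ..
  have k: "k \<in> {1..n d}" "k + 1 \<in> {1..n d}" and l: "l \<in> {1..n c}" "l + 1 \<in> {1..n c}"
    using d c by auto
  have "(\<phi> d (k + 1) \<Theta>s)\<^sup>2 < (\<phi> d k \<Theta>s)\<^sup>2"
    using phi_step[OF d] phi_pos[OF d(1) k(2) less_imp_le[OF Theta_bar_root(1)]] Theta_bar_root(1)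
    by (intro power_strict_mono) auto
  then have "G (k + 1) < G k"
    unfolding G_def by (rule mult_strict_left_mono) (use gam_pos lam_pos d in auto)
  moreover have "Q (l + 1) - Q l < 0"
    unfolding Q_def using phi_step[OF c] Theta_bar_root(1) c davg_pos
    by (simp add: divide_strict_right_mono)
  ultimately have "0 < (G (k + 1) - G k) * (Q (l + 1) - Q l)" by (intro mult_neg_neg) auto
  moreover have "A < 0" unfolding A_def by (rule secant_Theta_bar_neg)
  ultimately have "(G (k + 1) - G k) * (Q (l + 1) - Q l) / A \<le> 0"
    by (simp add: divide_pos_neg less_imp_le)
  moreover have "partial (payoff s r lam gam h d (k+1)) xs (idx c (l+1))
       - partial (payoff s r lam gam h d k) xs (idx c (l+1))
       - partial (payoff s r lam gam h d (k+1)) xs (idx c l)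
       + partial (payoff s r lam gam h d k) xs (idx c l)
      = (G (k + 1) - G k) * (Q (l + 1) - Q l) / A"
    unfolding P[OF k(2) l(2)] P[OF k(1) l(2)] P[OF k(2) l(1)] P[OF k(1) l(1)]
    by (simp add: diff_divide_distrib add_divide_distrib algebra_simps)
  ultimately show ?thesis by simp
qed

end

theorem theorem4:
  fixes D :: nat and m :: "nat \<Rightarrow> real" and n :: "nat \<Rightarrow> nat"
    and s :: "nat \<Rightarrow> nat \<Rightarrow> real" and lam gam r :: real
    and idx :: "nat \<Rightarrow> nat \<Rightarrow> 'i::finite" and xs :: "real ^ 'i"
  assumes D_pos: "D \<ge> 1"
    and m_range: "\<forall>d\<in>{1..D}. 0 < m d \<and> m d \<le> 1"
    and m_sum: "(\<Sum>d=1..D. m d) = 1"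
    and n_pos: "\<forall>d\<in>{1..D}. n d \<ge> 1"
    and s_range: "\<forall>d\<in>{1..D}. \<forall>i\<in>{1..n d}. 0 \<le> s d i \<and> s d i \<le> 1"
    and s_mono: "\<forall>d\<in>{1..D}. \<forall>i\<in>{1..n d}. \<forall>j\<in>{1..n d}. i < j \<longrightarrow> s d i < s d j"
    and idx_bij: "bij_betw (\<lambda>(d, i). idx d i) {(d, i). d \<in> {1..D} \<and> i \<in> {1..n d}} UNIV"
    and lam_pos: "lam > 0" and gam_pos: "gam > 0" and r_neg: "r < 0"
    and hyp: "\<forall>d\<in>{1..D}. \<forall>i\<in>{1..n d}. lam * real d * (1 - s d i) > gam"
    and xs_state: "social_state D m n idx xs"
  shows "(\<exists>DH. ((\<lambda>\<Theta>. Hfun D m n s lam gam idx \<Theta> xs) has_real_derivative DH)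
                   (at (Theta_bar D m n s lam gam idx xs)) \<and> DH < 0)
    \<and> (\<exists>N h. open N \<and> xs \<in> N \<and>
          implicit_sol D m n s lam gam idx N xs (Theta_bar D m n s lam gam idx xs) h \<and>
          (\<forall>g. implicit_sol D m n s lam gam idx N xs (Theta_bar D m n s lam gam idx xs) g
                \<longrightarrow> (\<forall>y\<in>N. g y = h y)))
    \<and> (\<forall>N h. open N \<and> xs \<in> N \<and>
          implicit_sol D m n s lam gam idx N xs (Theta_bar D m n s lam gam idx xs) h \<longrightarrow>
          (\<forall>d\<in>{1..D}. \<forall>c\<in>{1..D}. \<forall>k\<in>{1..n d - 1}. \<forall>l\<in>{1..n c - 1}.
             partial (payoff s r lam gam h d (k+1)) xs (idx c (l+1))
             - partial (payoff s r lam gam h d k) xs (idx c (l+1))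
             - partial (payoff s r lam gam h d (k+1)) xs (idx c l)
             + partial (payoff s r lam gam h d k) xs (idx c l) \<le> 0))"
proof -
  interpret sis_game D m n s lam gam idx xs
    using D_pos m_range n_pos s_range s_mono bij_betw_imp_inj_on[OF idx_bij] lam_pos gam_pos hyp
      xs_state
    by unfold_locales auto
  have "((\<lambda>\<Theta>. H \<Theta> xs) has_real_derivative secant \<Theta>s \<Theta>s xs) (at \<Theta>s)"
    using H_has_derivative_Theta Theta_bar_root(1) by simp
  moreover have "open nbhd" "xs \<in> nbhd" "implicit_sol D m n s lam gam idx nbhd xs \<Theta>s theta_sol"
    by (fact open_nbhd xs_in_nbhd implicit_sol_theta_sol)+
  ultimately show ?thesis
    using secant_Theta_bar_neg implicit_sol_eq_theta_sol submodular by blast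
qed

end
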